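(* Assume (A1)–(A4) and let $b$ be consistent. Then the ADMM sequences $\{x_k\}$ and $\{y_k\}$ are bounded and $$\sum_{k=1}^\infty\big(D_{\mu_k}f(y_{k+1},y_k)+E_k\big)<\infty.$$ In particular $Ax_k\to b$, $Wx_k-y_k\to0$ and $y_{k+1}-y_k\to0$ as $k\to\infty$.
   Context: $\mathcal X,\mathcal Y,\mathcal H$ are real Hilbert spaces. Standing assumptions: (A1) $A:\mathcal X\to\mathcal H$ is bounded linear. (A2) $f:\mathcal Y\to(-\infty,\infty]$ is proper, lower semicontinuous and strongly convex with constant $c_0>0$: $f(ty_1+(1-t)y_2)+c_0t(1-t)\|y_1-y_2\|^2\le tf(y_1)+(1-t)f(y_2)$ for all $y_1,y_2$, $t\in[0,1]$. (A3) $W:\mathscr D(W)\subset\mathcal X\to\mathcal Y$ is a densely defined closed linear operator. (A4) There is $c_1>0$ with $\|Ax\|^2+\|Wx\|^2\ge c_1\|x\|^2$ for all $x\in\mathscr D(W)$. $\mathscr D(f)=\{y:f(y)<\infty\}$; $b\in\mathcal H$ is consistent if $b=Ax$ for some $x\in\mathscr D(W)$ with $Wx\in\mathscr D(f)$. ADMM: fix $\rho_1,\rho_2>0$ and initial $y_0\in\mathcal Y$, $\lambda_0\in\mathcal H$, $\mu_0\in\mathcal Y$. For $k=0,1,\dots$: $x_{k+1}=\arg\min_{x\in\mathscr D(W)}\{\langle\lambda_k,Ax\rangle+\langle\mu_k,Wx\rangle+\frac{\rho_1}{2}\|Ax-b\|^2+\frac{\rho_2}{2}\|Wx-y_k\|^2\}$,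 $y_{k+1}=\arg\min_{y\in\mathcal Y}\{f(y)-\langle\mu_k,y\rangle+\frac{\rho_2}{2}\|Wx_{k+1}-y\|^2\}$, $\lambda_{k+1}=\lambda_k+\rho_1(Ax_{k+1}-b)$, $\mu_{k+1}=\mu_k+\rho_2(Wx_{k+1}-y_{k+1})$. (These minimizers exist and are unique.) Residuals $r_k=Ax_k-b$, $s_k=Wx_k-y_k$ and $E_k=\rho_1\|r_k\|^2+\rho_2\|s_k\|^2+\rho_2\|y_k-y_{k-1}\|^2$ for $k\ge1$. One has $\mu_k\in\partial f(y_k)$ for $k\ge1$. Bregman distance: for $y$ with $\mu\in\partial f(y)$, $D_\mu f(\bar y,y)=f(\bar y)-f(y)-\langle\mu,\bar y-y\rangle$. *)

theory Defs
  imports "HOL-Analysis.Analysis"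
begin

definition proper_fun :: "('y \<Rightarrow> ereal) \<Rightarrow> bool" where
  "proper_fun f \<longleftrightarrow> (\<forall>y. f y \<noteq> -\<infinity>) \<and> (\<exists>y. f y < \<infinity>)"

definition lsc_fun :: "('y::topological_space \<Rightarrow> ereal) \<Rightarrow> bool" where
  "lsc_fun f \<longleftrightarrow> (\<forall>c::real. closed {y. f y \<le> ereal c})"

definition strongly_convex :: "('y::real_normed_vector \<Rightarrow> ereal) \<Rightarrow> real \<Rightarrow> bool" where
  "strongly_convex f c0 \<longleftrightarrow>
     (\<forall>y1 y2. \<forall>t::real. 0 \<le> t \<and> t \<le> 1 \<longrightarrow>
        f (t *\<^sub>R y1 + (1 - t) *\<^sub>R y2) + ereal (c0 * t * (1 - t) * (norm (y1 - y2))\<^sup>2)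
          \<le> ereal t * f y1 + ereal (1 - t) * f y2)"

definition effdom :: "('y \<Rightarrow> ereal) \<Rightarrow> 'y set" where
  "effdom f = {y. f y < \<infinity>}"

definition subdiff :: "('y::real_inner \<Rightarrow> ereal) \<Rightarrow> 'y \<Rightarrow> 'y set" where
  "subdiff f y = {mu. \<forall>z. f y + ereal (inner mu (z - y)) \<le> f z}"

definition bregman :: "('y::real_inner \<Rightarrow> ereal) \<Rightarrow> 'y \<Rightarrow> 'y \<Rightarrow> 'y \<Rightarrow> ereal" where
  "bregman f mu ybar y = f ybar - f y - ereal (inner mu (ybar - y))"

definition dd_closed_linear_op :: "'x::real_normed_vector set \<Rightarrow> ('x \<Rightarrow> 'y::real_normed_vector) \<Rightarrow> bool" where
  "dd_closed_linear_op DW W \<longleftrightarrow>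
     subspace DW \<and>
     (\<forall>x\<in>DW. \<forall>z\<in>DW. W (x + z) = W x + W z) \<and>
     (\<forall>c. \<forall>x\<in>DW. W (c *\<^sub>R x) = c *\<^sub>R W x) \<and>
     closure DW = UNIV \<and>
     closed ((\<lambda>x. (x, W x)) ` DW)"

end

theory Submission
  imports Defs
begin

text \<open>
Fix xh \<in> D(W) with A xh = b and f(W xh) < \<infinity>, and put yh = W xh. The first-order condition
of the x-step, tested with x_{k+1} - x_k and with xh - x_{k+1}, and the strong subgradient
inequality of the y-step show that
  L_k = D_{\<mu>_k} f(yh, y_k) - \<rho>_2 <y_k - y_{k-1}, yh - y_k> + \<rho>_2 / (2 c_0) E_k + \<rho>_2 |y_k - y_{k-1}|^2
satisfies L_{k+1} \<le> L_k - E_{k+1} / 2 - D_{\<mu>_k} f(y_{k+1}, y_k) for k \<ge> 1, while Young's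
inequality gives L_k \<ge> c_0 / 2 |yh - y_k|^2 \<ge> 0. Telescoping bounds the series and |yh - y_k|;
the coercivity (A4) then bounds x_k - xh.
\<close>

lemma linear_plus_quadratic_nonneg_imp_zero:
  fixes G C :: real
  assumes "C \<ge> 0" and nonneg: "\<And>t. 0 \<le> t * G + t\<^sup>2 * C"
  shows "G = 0"
proof -
  have "(- G / (C + 1)) * G + (- G / (C + 1))\<^sup>2 * C = - G\<^sup>2 / (C + 1)\<^sup>2"
    using \<open>C \<ge> 0\<close> by (simp add: power2_eq_square divide_simps) (simp add: algebra_simps)
  then have "G\<^sup>2 / (C + 1)\<^sup>2 \<le> 0"
    using nonneg[of "- G / (C + 1)"] by linarith
  then show ?thesis
    using \<open>C \<ge> 0\<close> by (simp add: divide_le_0_iff)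
qed

lemma le_of_le_add_mult_small:
  fixes X Y K :: real
  assumes "K \<ge> 0" and le: "\<And>t. 0 < t \<Longrightarrow> t < 1 \<Longrightarrow> X \<le> Y + t * K"
  shows "X \<le> Y"
proof (rule field_le_epsilon)
  fix e :: real assume "e > 0"
  define t where "t = min (1/2) (e / (K + 1))"
  have "0 < t" "t < 1" using \<open>e > 0\<close> \<open>K \<ge> 0\<close> by (auto simp: t_def)
  have "t * K \<le> e / (K + 1) * K" using \<open>K \<ge> 0\<close> by (intro mult_right_mono) (auto simp: t_def)
  also have "\<dots> \<le> e" using \<open>e > 0\<close> \<open>K \<ge> 0\<close> by (simp add: field_simps)
  finally show "X \<le> Y + e" using le[OF \<open>0 < t\<close> \<open>t < 1\<close>] by linarith
qed

lemma telescoping_sum_le: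
  fixes u g :: "nat \<Rightarrow> real"
  assumes "\<And>n. u (Suc n) + g n \<le> u n"
  shows "u n + (\<Sum>j<n. g j) \<le> u 0"
  using assms by (induction n) (auto intro: order_trans[rotated])

lemma norm_add_scaleR_power2:
  fixes p q :: "'a::real_inner"
  shows "(norm (p + t *\<^sub>R q))\<^sup>2 = (norm p)\<^sup>2 + 2 * t * inner p q + t\<^sup>2 * (norm q)\<^sup>2"
  unfolding power2_norm_eq_inner by (simp add: inner_simps inner_commute power2_eq_square algebra_simps)

lemma power2_norm_diff_le:
  fixes p q :: "'a::real_normed_vector"
  shows "(norm (p - q))\<^sup>2 \<le> 2 * (norm p)\<^sup>2 + 2 * (norm q)\<^sup>2"
proof -
  have "(norm (p - q))\<^sup>2 \<le> (norm p + norm q)\<^sup>2"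
    using norm_triangle_ineq4[of p q] by (simp add: power_mono)
  also have "\<dots> \<le> 2 * (norm p)\<^sup>2 + 2 * (norm q)\<^sup>2"
    using zero_le_power2[of "norm p - norm q"] by (simp add: power2_sum power2_diff)
  finally show ?thesis .
qed

lemma mult_inner_le_young:
  fixes u v :: "'a::real_inner"
  assumes "c > 0"
  shows "r * inner u v \<le> c / 2 * (norm v)\<^sup>2 + r\<^sup>2 / (2 * c) * (norm u)\<^sup>2"
proof -
  have "0 \<le> (norm (c *\<^sub>R v - r *\<^sub>R u))\<^sup>2" by simp
  then have "2 * c * (r * inner u v) \<le> c\<^sup>2 * (norm v)\<^sup>2 + r\<^sup>2 * (norm u)\<^sup>2"
    unfolding power2_norm_eq_inner by (simp add: inner_simps inner_commute algebra_simps power2_eq_square)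
  also have "\<dots> = 2 * c * (c / 2 * (norm v)\<^sup>2 + r\<^sup>2 / (2 * c) * (norm u)\<^sup>2)"
    using assms by (simp add: field_simps power2_eq_square)
  finally show ?thesis using assms by simp
qed

lemma norm_le_sqrt_if_scaled_power2_le:
  fixes v :: "'a::real_normed_vector"
  assumes "c > 0" "c * (norm v)\<^sup>2 \<le> M"
  shows "norm v \<le> sqrt (M / c)"
  using assms by (intro real_le_rsqrt) (simp add: field_simps)

lemma tendsto_zero_if_scaled_power2_le:
  fixes v :: "nat \<Rightarrow> 'a::real_normed_vector"
  assumes "c > 0" and le: "\<And>k. c * (norm (v k))\<^sup>2 \<le> e k" and "e \<longlonglongrightarrow> 0"
  shows "v \<longlonglongrightarrow> 0"
proof (rule Lim_null_comparison)
  show "\<forall>\<^sub>F k in sequentially. norm (v k) \<le> sqrt (e k / c)"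
    using norm_le_sqrt_if_scaled_power2_le[OF \<open>c > 0\<close> le] by simp
  show "(\<lambda>k. sqrt (e k / c)) \<longlonglongrightarrow> 0"
    using tendsto_real_sqrt[OF tendsto_divide_zero[OF \<open>e \<longlonglongrightarrow> 0\<close>, of c]] by simp
qed

lemma dd_closed_linear_opD:
  assumes "dd_closed_linear_op D W"
  shows dd_closed_linear_op_subspace: "subspace D"
    and dd_closed_linear_op_add: "u \<in> D \<Longrightarrow> v \<in> D \<Longrightarrow> W (u + v) = W u + W v"
    and dd_closed_linear_op_scaleR: "u \<in> D \<Longrightarrow> W (c *\<^sub>R u) = c *\<^sub>R W u"
  using assms unfolding dd_closed_linear_op_def by blast+

lemma dd_closed_linear_op_diff:
  assumes "dd_closed_linear_op D W" "u \<in> D" "v \<in> D"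
  shows "W (u - v) = W u - W v"
proof -
  have "u - v \<in> D"
    using assms by (simp add: dd_closed_linear_op_subspace subspace_diff)
  then have "W u = W v + W (u - v)"
    using dd_closed_linear_op_add[OF assms(1) \<open>v \<in> D\<close>] by fastforce
  then show ?thesis
    by (simp add: algebra_simps)
qed

lemma quadratic_argmin_on_subspace_stationary:
  fixes A :: "'x::real_vector \<Rightarrow> 'h::real_inner" and W :: "'x \<Rightarrow> 'y::real_inner"
  assumes D: "subspace D" and "linear A"
    and W_add: "\<And>u v. u \<in> D \<Longrightarrow> v \<in> D \<Longrightarrow> W (u + v) = W u + W v"
    and W_scale: "\<And>c u. u \<in> D \<Longrightarrow> W (c *\<^sub>R u) = c *\<^sub>R W u"
    and "r1 \<ge> 0" "r2 \<ge> 0" and u: "u \<in> D" and z: "z \<in> D"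
    and argmin: "\<forall>v\<in>D. inner l (A u) + inner m (W u) + r1 / 2 * (norm (A u - a))\<^sup>2
                          + r2 / 2 * (norm (W u - c))\<^sup>2
                        \<le> inner l (A v) + inner m (W v) + r1 / 2 * (norm (A v - a))\<^sup>2
                          + r2 / 2 * (norm (W v - c))\<^sup>2"
  shows "inner (l + r1 *\<^sub>R (A u - a)) (A z) + inner (m + r2 *\<^sub>R (W u - c)) (W z) = 0"
proof (rule linear_plus_quadratic_nonneg_imp_zero)
  show "0 \<le> r1 / 2 * (norm (A z))\<^sup>2 + r2 / 2 * (norm (W z))\<^sup>2"
    using \<open>r1 \<ge> 0\<close> \<open>r2 \<ge> 0\<close> by simp
  fix t :: real
  define v where "v = u + t *\<^sub>R z"
  have "v \<in> D"
    using D u z by (simp add: v_def subspace_add subspace_scale)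
  have Av: "A v = A u + t *\<^sub>R A z"
    using \<open>linear A\<close> by (simp add: v_def linear_add linear_scale)
  have Wv: "W v = W u + t *\<^sub>R W z"
    using D u z by (simp add: v_def W_add W_scale subspace_scale)
  have nA: "(norm (A v - a))\<^sup>2 = (norm (A u - a))\<^sup>2 + 2 * t * inner (A u - a) (A z) + t\<^sup>2 * (norm (A z))\<^sup>2"
    using norm_add_scaleR_power2[of "A u - a" t "A z"] by (simp add: Av algebra_simps)
  have nW: "(norm (W v - c))\<^sup>2 = (norm (W u - c))\<^sup>2 + 2 * t * inner (W u - c) (W z) + t\<^sup>2 * (norm (W z))\<^sup>2"
    using norm_add_scaleR_power2[of "W u - c" t "W z"] by (simp add: Wv algebra_simps)
  have "inner l (A u) + inner m (W u) + r1 / 2 * (norm (A u - a))\<^sup>2 + r2 / 2 * (norm (W u - c))\<^sup>2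
      \<le> inner l (A v) + inner m (W v) + r1 / 2 * (norm (A v - a))\<^sup>2 + r2 / 2 * (norm (W v - c))\<^sup>2"
    using argmin \<open>v \<in> D\<close> by blast
  then show "0 \<le> t * (inner (l + r1 *\<^sub>R (A u - a)) (A z) + inner (m + r2 *\<^sub>R (W u - c)) (W z))
      + t\<^sup>2 * (r1 / 2 * (norm (A z))\<^sup>2 + r2 / 2 * (norm (W z))\<^sup>2)"
    unfolding nA nW by (simp add: Av Wv inner_simps algebra_simps)
qed

text \<open>Compare p with p + t (v - p) in the argmin property, use strong convexity, and let t \<rightarrow> 0.\<close>
lemma strongly_convex_prox_point_subgradient:
  fixes f :: "'y::real_inner \<Rightarrow> ereal"
  assumes "strongly_convex f c0" "c0 \<ge> 0" "r \<ge> 0"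
    and not_minf: "\<forall>v. f v \<noteq> -\<infinity>"
    and argmin: "\<forall>v. f p - ereal (inner m p) + ereal (r / 2 * (norm (w - p))\<^sup>2)
                    \<le> f v - ereal (inner m v) + ereal (r / 2 * (norm (w - v))\<^sup>2)"
    and fp: "f p = ereal Fp" and fv: "f v = ereal Fv"
  shows "Fp + inner (m + r *\<^sub>R (w - p)) (v - p) + c0 * (norm (v - p))\<^sup>2 \<le> Fv"
proof -
  define N where "N = (norm (v - p))\<^sup>2"
  define P where "P = inner (m + r *\<^sub>R (w - p)) (v - p)"
  have "Fp + P + c0 * N \<le> Fv"
  proof (rule le_of_le_add_mult_small)
    show "0 \<le> c0 * N + r * N / 2"
      using \<open>c0 \<ge> 0\<close> \<open>r \<ge> 0\<close> by (simp add: N_def)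
    fix t :: real assume "0 < t" "t < 1"
    define vt where "vt = p + t *\<^sub>R (v - p)"
    have "vt = t *\<^sub>R v + (1 - t) *\<^sub>R p"
      by (simp add: vt_def algebra_simps)
    then have "f vt + ereal (c0 * t * (1 - t) * N) \<le> ereal t * f v + ereal (1 - t) * f p"
      using assms(1) \<open>0 < t\<close> \<open>t < 1\<close> unfolding strongly_convex_def N_def by simp
    also have "\<dots> = ereal (t * Fv + (1 - t) * Fp)"
      by (simp add: fp fv)
    finally have "f vt + ereal (c0 * t * (1 - t) * N) \<le> ereal (t * Fv + (1 - t) * Fp)" .
    moreover from this obtain Ft where Ft: "f vt = ereal Ft"
      using not_minf by (cases "f vt") auto
    ultimately have convex: "Ft + c0 * t * (1 - t) * N \<le> t * Fv + (1 - t) * Fp"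
      by simp
    have "Fp - inner m p + r / 2 * (norm (w - p))\<^sup>2 \<le> Ft - inner m vt + r / 2 * (norm (w - vt))\<^sup>2"
      using argmin[rule_format, of vt] by (simp add: fp Ft)
    moreover have "inner m vt = inner m p + t * inner m (v - p)"
      by (simp add: vt_def inner_simps)
    moreover have "(norm (w - vt))\<^sup>2 = (norm (w - p))\<^sup>2 - 2 * t * inner (w - p) (v - p) + t\<^sup>2 * N"
      using norm_add_scaleR_power2[of "w - p" "- t" "v - p"]
      by (simp add: vt_def N_def algebra_simps)
    ultimately have "Fp \<le> Ft - t * inner m (v - p) - r * t * inner (w - p) (v - p) + r / 2 * t\<^sup>2 * N"
      by (simp add: algebra_simps)
    then have "t * (Fp + P + c0 * N - Fv - t * (c0 * N + r * N / 2)) \<le> 0"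
      using convex by (simp add: P_def inner_simps algebra_simps power2_eq_square)
    then show "Fp + P + c0 * N \<le> Fv + t * (c0 * N + r * N / 2)"
      using \<open>0 < t\<close> by (simp add: mult_le_0_iff)
  qed
  then show ?thesis
    by (simp add: P_def N_def)
qed

lemma energy_difference_eq:
  fixes a a' :: "'h::real_inner" and s s' d d' :: "'y::real_inner"
  assumes "rho1 * inner a (a - a') + rho2 * inner (s + d - d') (s - s' + d) = 0"
  shows "(rho1 * (norm a)\<^sup>2 + rho2 * (norm s)\<^sup>2 + rho2 * (norm d)\<^sup>2)
           - (rho1 * (norm a')\<^sup>2 + rho2 * (norm s')\<^sup>2 + rho2 * (norm d')\<^sup>2)
         = - rho1 * (norm (a - a'))\<^sup>2 - rho2 * (norm (s - s' + d - d'))\<^sup>2 - 2 * rho2 * inner s d"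
proof -
  have polar_a: "2 * inner a (a - a') = (norm a)\<^sup>2 - (norm a')\<^sup>2 + (norm (a - a'))\<^sup>2"
    unfolding power2_norm_eq_inner by (simp add: inner_simps inner_commute algebra_simps)
  have polar_s: "2 * inner (s + d - d') (s - s' + d)
      = (norm s)\<^sup>2 - (norm s')\<^sup>2 + (norm d)\<^sup>2 - (norm d')\<^sup>2 + (norm (s - s' + d - d'))\<^sup>2 + 2 * inner s d"
    unfolding power2_norm_eq_inner by (simp add: inner_simps inner_commute algebra_simps)
  have "rho1 * (2 * inner a (a - a')) + rho2 * (2 * inner (s + d - d') (s - s' + d)) = 0"
    using assms by (simp add: algebra_simps)
  then show ?thesis
    unfolding polar_a polar_s by (simp add: algebra_simps)
qed

text \<open>The algebraic core of the Lyapunov decrease, with a = A x_{k+2} - b, s = W x_{k+2} - y_{k+2},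
  d = y_{k+2} - y_{k+1}, d' = y_{k+1} - y_k and e = yh - y_{k+2}.\<close>
lemma lyapunov_step_inequality:
  fixes a :: "'h::real_inner" and s d d' e :: "'y::real_inner"
  assumes orth: "- rho1 * inner a a + rho2 * inner (s + d - d') (e - s) = 0"
    and nonneg: "inner s d \<ge> 0" "rho1 \<ge> 0" "rho2 \<ge> 0"
    and energy: "beta * (En - Eo) \<le> - 2 * rho2 * (norm d)\<^sup>2"
    and En: "En = rho1 * (norm a)\<^sup>2 + rho2 * (norm s)\<^sup>2 + rho2 * (norm d)\<^sup>2"
  shows "- rho2 * inner d e + beta * En + rho2 * (norm d)\<^sup>2
           \<le> rho2 * inner s e - rho2 * inner d' (e + d) + beta * Eo + rho2 * (norm d')\<^sup>2 - En / 2"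
proof -
  have "rho2 * inner s e + rho2 * inner d e - rho2 * inner d' e
      = rho1 * (norm a)\<^sup>2 + rho2 * (norm s)\<^sup>2 + rho2 * inner s d - rho2 * inner d' s"
    using orth unfolding power2_norm_eq_inner by (simp add: inner_simps inner_commute algebra_simps)
  moreover have "rho2 * inner d' (e + d) = rho2 * inner d' e + rho2 * inner d' d"
    by (simp add: inner_simps algebra_simps)
  moreover have "rho2 * inner d' s + rho2 * inner d' d
      \<le> rho2 * (norm d')\<^sup>2 + 1/4 * (rho2 * (norm s)\<^sup>2) + 1/2 * (rho2 * inner s d) + 1/4 * (rho2 * (norm d)\<^sup>2)"
  proof -
    have "0 \<le> (norm (d' - (1/2) *\<^sub>R (s + d)))\<^sup>2" by simp
    then have "inner d' s + inner d' d \<le> (norm d')\<^sup>2 + 1/4 * (norm s)\<^sup>2 + 1/2 * inner s d + 1/4 * (norm d)\<^sup>2"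
      unfolding power2_norm_eq_inner by (simp add: inner_simps inner_commute algebra_simps)
    from mult_left_mono[OF this \<open>rho2 \<ge> 0\<close>] show ?thesis
      by (simp add: algebra_simps)
  qed
  moreover have "beta * En - beta * Eo \<le> - 2 * (rho2 * (norm d)\<^sup>2)"
    using energy by (simp add: algebra_simps)
  moreover have "rho1 * (norm a)\<^sup>2 \<ge> 0" "rho2 * (norm s)\<^sup>2 \<ge> 0" "rho2 * (norm d)\<^sup>2 \<ge> 0"
    "rho2 * inner s d \<ge> 0"
    using nonneg by simp_all
  ultimately show ?thesis
    using En by linarith
qed

locale admm =
  fixes A :: "'x::real_inner \<Rightarrow> 'h::real_inner"
    and W :: "'x \<Rightarrow> 'y::real_inner"
    and DW :: "'x set"
    and f :: "'y \<Rightarrow> ereal"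
    and c0 c1 rho1 rho2 :: real
    and b :: 'h
    and x :: "nat \<Rightarrow> 'x" and y :: "nat \<Rightarrow> 'y"
    and lam :: "nat \<Rightarrow> 'h" and mu :: "nat \<Rightarrow> 'y"
    and xh :: 'x
  assumes A_linear: "linear A"
    and f_proper: "proper_fun f"
    and c0_pos: "c0 > 0"
    and f_strongly_convex: "strongly_convex f c0"
    and W_op: "dd_closed_linear_op DW W"
    and c1_pos: "c1 > 0"
    and coercive: "\<forall>z\<in>DW. (norm (A z))\<^sup>2 + (norm (W z))\<^sup>2 \<ge> c1 * (norm z)\<^sup>2"
    and rho1_pos: "rho1 > 0" and rho2_pos: "rho2 > 0"
    and x_step: "\<And>k. x (Suc k) \<in> DW \<and>
        (\<forall>z\<in>DW. inner (lam k) (A (x (Suc k))) + inner (mu k) (W (x (Suc k)))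
                  + rho1 / 2 * (norm (A (x (Suc k)) - b))\<^sup>2 + rho2 / 2 * (norm (W (x (Suc k)) - y k))\<^sup>2
               \<le> inner (lam k) (A z) + inner (mu k) (W z)
                  + rho1 / 2 * (norm (A z - b))\<^sup>2 + rho2 / 2 * (norm (W z - y k))\<^sup>2)"
    and y_step: "\<And>k. \<forall>v. f (y (Suc k)) - ereal (inner (mu k) (y (Suc k)))
                         + ereal (rho2 / 2 * (norm (W (x (Suc k)) - y (Suc k)))\<^sup>2)
                       \<le> f v - ereal (inner (mu k) v) + ereal (rho2 / 2 * (norm (W (x (Suc k)) - v))\<^sup>2)"
    and lam_step: "\<And>k. lam (Suc k) = lam k + rho1 *\<^sub>R (A (x (Suc k)) - b)"
    and mu_step: "\<And>k. mu (Suc k) = mu k + rho2 *\<^sub>R (W (x (Suc k)) - y (Suc k))"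
    and xh_dom: "xh \<in> DW" and A_xh: "A xh = b" and f_W_xh: "f (W xh) < \<infinity>"

begin

abbreviation yh :: 'y where "yh \<equiv> W xh"

definition f_real :: "'y \<Rightarrow> real" where "f_real v = real_of_ereal (f v)"

definition energy :: "nat \<Rightarrow> real" where
  "energy k = rho1 * (norm (A (x k) - b))\<^sup>2 + rho2 * (norm (W (x k) - y k))\<^sup>2
              + rho2 * (norm (y k - y (k - 1)))\<^sup>2"

definition bregman_step :: "nat \<Rightarrow> real" where
  "bregman_step n = f_real (y (Suc n)) - f_real (y n) - inner (mu n) (y (Suc n) - y n)"

definition bregman_hat :: "nat \<Rightarrow> real" where
  "bregman_hat n = f_real yh - f_real (y n) - inner (mu n) (yh - y n)"

definition lyapunov :: "nat \<Rightarrow> real" where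
  "lyapunov n = bregman_hat n - rho2 * inner (y n - y (n - 1)) (yh - y n)
                + rho2 / (2 * c0) * energy n + rho2 * (norm (y n - y (n - 1)))\<^sup>2"

lemmas DW_subspace = dd_closed_linear_op_subspace[OF W_op]
  and W_add = dd_closed_linear_op_add[OF W_op]
  and W_scaleR = dd_closed_linear_op_scaleR[OF W_op]
  and W_diff = dd_closed_linear_op_diff[OF W_op]

lemma f_not_minf: "f v \<noteq> -\<infinity>"
  using f_proper unfolding proper_fun_def by blast

lemma f_eq_f_real: "f v < \<infinity> \<Longrightarrow> f v = ereal (f_real v)"
  using f_not_minf[of v] unfolding f_real_def by (cases "f v") auto

lemma f_y_finite: "f (y (Suc k)) < \<infinity>"
proof -
  have "f (y (Suc k)) - ereal (inner (mu k) (y (Suc k))) + ereal (rho2 / 2 * (norm (W (x (Suc k)) - y (Suc k)))\<^sup>2)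
      \<le> f yh - ereal (inner (mu k) yh) + ereal (rho2 / 2 * (norm (W (x (Suc k)) - yh))\<^sup>2)"
    using y_step by blast
  moreover have "f yh - ereal (inner (mu k) yh) + ereal (rho2 / 2 * (norm (W (x (Suc k)) - yh))\<^sup>2) < \<infinity>"
    using f_W_xh f_not_minf by (cases "f yh") auto
  ultimately show ?thesis
    by (cases "f (y (Suc k))") auto
qed

lemma energy_nonneg: "0 \<le> energy k"
  using rho1_pos rho2_pos by (simp add: energy_def)

lemma energy_ge:
  shows energy_ge_A_residual: "rho1 * (norm (A (x k) - b))\<^sup>2 \<le> energy k"
    and energy_ge_W_residual: "rho2 * (norm (W (x k) - y k))\<^sup>2 \<le> energy k"
    and energy_ge_y_diff: "rho2 * (norm (y k - y (k - 1)))\<^sup>2 \<le> energy k"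
  using rho1_pos rho2_pos by (simp_all add: energy_def)

lemma x_stationary:
  assumes "z \<in> DW"
  shows "inner (lam (Suc k)) (A z) + inner (mu (Suc k)) (W z) + rho2 * inner (y (Suc k) - y k) (W z) = 0"
proof -
  have "inner (lam k + rho1 *\<^sub>R (A (x (Suc k)) - b)) (A z)
        + inner (mu k + rho2 *\<^sub>R (W (x (Suc k)) - y k)) (W z) = 0"
    using x_step[of k] rho1_pos rho2_pos assms
    by (intro quadratic_argmin_on_subspace_stationary[where D = DW])
       (auto simp: A_linear DW_subspace W_add W_scaleR)
  then show ?thesis
    by (simp add: lam_step mu_step inner_simps algebra_simps)
qed

lemma x_stationary_diff:
  assumes "z \<in> DW"
  shows "rho1 * inner (A (x (Suc (Suc k))) - b) (A z)
         + rho2 * inner ((W (x (Suc (Suc k))) - y (Suc (Suc k))) + (y (Suc (Suc k)) - y (Suc k))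
                         - (y (Suc k) - y k)) (W z) = 0"
  using x_stationary[OF assms, of "Suc k"] x_stationary[OF assms, of k]
  by (simp add: lam_step[of "Suc k"] mu_step[of "Suc k"] inner_simps algebra_simps)

lemma y_strong_subgradient:
  assumes "f v < \<infinity>"
  shows "f_real (y (Suc k)) + inner (mu (Suc k)) (v - y (Suc k)) + c0 * (norm (v - y (Suc k)))\<^sup>2
         \<le> f_real v"
  using strongly_convex_prox_point_subgradient[OF f_strongly_convex _ _ _ y_step
          f_eq_f_real[OF f_y_finite] f_eq_f_real[OF assms]] c0_pos rho2_pos f_not_minf
  by (simp add: mu_step)

lemma bregman_step_lower: "c0 * (norm (y (Suc (Suc k)) - y (Suc k)))\<^sup>2 \<le> bregman_step (Suc k)"
  using y_strong_subgradient[OF f_y_finite, of k "Suc k"] unfolding bregman_step_def by simp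

lemma bregman_step_nonneg: "0 \<le> bregman_step (Suc k)"
  using c0_pos by (intro order_trans[OF _ bregman_step_lower]) simp

lemma bregman_hat_lower: "c0 * (norm (yh - y (Suc k)))\<^sup>2 \<le> bregman_hat (Suc k)"
  using y_strong_subgradient[OF f_W_xh, of k] unfolding bregman_hat_def by simp

text \<open>Strong monotonicity of \<partial>f, as \<mu>_{k+2} - \<mu>_{k+1} = \<rho>_2 (W x_{k+2} - y_{k+2}).\<close>
lemma subgradient_strongly_monotone:
  "2 * c0 * (norm (y (Suc (Suc k)) - y (Suc k)))\<^sup>2
   \<le> rho2 * inner (W (x (Suc (Suc k))) - y (Suc (Suc k))) (y (Suc (Suc k)) - y (Suc k))"
proof -
  have "f_real (y (Suc (Suc k))) + inner (mu (Suc (Suc k))) (y (Suc k) - y (Suc (Suc k)))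
        + c0 * (norm (y (Suc k) - y (Suc (Suc k))))\<^sup>2 \<le> f_real (y (Suc k))"
    using y_strong_subgradient[OF f_y_finite] .
  then show ?thesis
    using bregman_step_lower[of k]
    by (simp add: bregman_step_def mu_step[of "Suc k"] norm_minus_commute inner_simps algebra_simps)
qed

lemma bregman_hat_three_point:
  "bregman_hat (Suc n) - bregman_hat n = - bregman_step n - rho2 * inner (W (x (Suc n)) - y (Suc n)) (yh - y (Suc n))"
  unfolding bregman_hat_def bregman_step_def mu_step by (simp add: inner_simps algebra_simps)

lemma energy_decrease:
  "rho2 / (2 * c0) * (energy (Suc (Suc k)) - energy (Suc k))
   \<le> - 2 * rho2 * (norm (y (Suc (Suc k)) - y (Suc k)))\<^sup>2"
proof -
  define a a' s s' d d' where "a = A (x (Suc (Suc k))) - b" and "a' = A (x (Suc k)) - b"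
    and "s = W (x (Suc (Suc k))) - y (Suc (Suc k))" and "s' = W (x (Suc k)) - y (Suc k)"
    and "d = y (Suc (Suc k)) - y (Suc k)" and "d' = y (Suc k) - y k"
  note defs = a_def a'_def s_def s'_def d_def d'_def
  have dx: "x (Suc (Suc k)) - x (Suc k) \<in> DW"
    using x_step DW_subspace by (simp add: subspace_diff)
  have "A (x (Suc (Suc k)) - x (Suc k)) = a - a'"
    by (simp add: defs A_linear linear_diff)
  moreover have "W (x (Suc (Suc k)) - x (Suc k)) = s - s' + d"
    using x_step by (simp add: defs W_diff)
  ultimately have "rho1 * inner a (a - a') + rho2 * inner (s + d - d') (s - s' + d) = 0"
    using x_stationary_diff[OF dx, of k, folded defs] by simp
  from energy_difference_eq[OF this]
  have "energy (Suc (Suc k)) - energy (Suc k)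
        = - rho1 * (norm (a - a'))\<^sup>2 - rho2 * (norm (s - s' + d - d'))\<^sup>2 - 2 * rho2 * inner s d"
    by (simp add: energy_def defs)
  also have "\<dots> \<le> - 2 * (rho2 * inner s d)"
  proof -
    have "0 \<le> rho1 * (norm (a - a'))\<^sup>2" "0 \<le> rho2 * (norm (s - s' + d - d'))\<^sup>2"
      using rho1_pos rho2_pos by simp_all
    then show ?thesis by linarith
  qed
  also have "\<dots> \<le> - 4 * c0 * (norm d)\<^sup>2"
    using subgradient_strongly_monotone[of k] by (simp add: defs)
  finally have "rho2 / (2 * c0) * (energy (Suc (Suc k)) - energy (Suc k))
      \<le> rho2 / (2 * c0) * (- 4 * c0 * (norm d)\<^sup>2)"
    using c0_pos rho2_pos by (intro mult_left_mono) auto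
  also have "\<dots> = - 2 * rho2 * (norm d)\<^sup>2"
    using c0_pos by (simp add: field_simps)
  finally show ?thesis
    by (simp add: d_def)
qed

lemma lyapunov_decrease:
  "lyapunov (Suc (Suc k)) \<le> lyapunov (Suc k) - energy (Suc (Suc k)) / 2 - bregman_step (Suc k)"
proof -
  define a s d d' e where "a = A (x (Suc (Suc k))) - b"
    and "s = W (x (Suc (Suc k))) - y (Suc (Suc k))"
    and "d = y (Suc (Suc k)) - y (Suc k)" and "d' = y (Suc k) - y k"
    and "e = yh - y (Suc (Suc k))"
  note defs = a_def s_def d_def d'_def e_def
  have dx: "xh - x (Suc (Suc k)) \<in> DW"
    using x_step xh_dom DW_subspace by (simp add: subspace_diff)
  have "A (xh - x (Suc (Suc k))) = - a"
    by (simp add: a_def A_xh A_linear linear_diff)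
  moreover have "W (xh - x (Suc (Suc k))) = e - s"
    using x_step xh_dom by (simp add: defs W_diff)
  ultimately have orth: "- rho1 * inner a a + rho2 * inner (s + d - d') (e - s) = 0"
    using x_stationary_diff[OF dx, of k, folded defs] by simp
  have "0 \<le> 2 * c0 * (norm d)\<^sup>2"
    using c0_pos by simp
  then have "0 \<le> rho2 * inner s d"
    using subgradient_strongly_monotone[of k, folded defs] by linarith
  then have "inner s d \<ge> 0"
    using rho2_pos by (simp add: zero_le_mult_iff)
  moreover have "energy (Suc (Suc k)) = rho1 * (norm a)\<^sup>2 + rho2 * (norm s)\<^sup>2 + rho2 * (norm d)\<^sup>2"
    by (simp add: energy_def defs)
  ultimately have "- rho2 * inner d e + rho2 / (2 * c0) * energy (Suc (Suc k)) + rho2 * (norm d)\<^sup>2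
      \<le> rho2 * inner s e - rho2 * inner d' (e + d) + rho2 / (2 * c0) * energy (Suc k)
         + rho2 * (norm d')\<^sup>2 - energy (Suc (Suc k)) / 2"
    using lyapunov_step_inequality[OF orth _ _ _ energy_decrease[of k, folded d_def]] rho1_pos rho2_pos
    by simp
  moreover have "bregman_hat (Suc (Suc k)) - bregman_hat (Suc k) = - bregman_step (Suc k) - rho2 * inner s e"
    using bregman_hat_three_point[of "Suc k"] by (simp add: defs)
  moreover have "lyapunov (Suc (Suc k))
      = bregman_hat (Suc (Suc k)) - rho2 * inner d e + rho2 / (2 * c0) * energy (Suc (Suc k)) + rho2 * (norm d)\<^sup>2"
    by (simp add: lyapunov_def defs)
  moreover have "lyapunov (Suc k)
      = bregman_hat (Suc k) - rho2 * inner d' (e + d) + rho2 / (2 * c0) * energy (Suc k) + rho2 * (norm d')\<^sup>2"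
    by (simp add: lyapunov_def defs)
  ultimately show ?thesis
    by linarith
qed

lemma lyapunov_lower: "c0 / 2 * (norm (yh - y (Suc k)))\<^sup>2 \<le> lyapunov (Suc k)"
proof -
  define d e where "d = y (Suc k) - y k" and "e = yh - y (Suc k)"
  have "rho2 * inner d e \<le> c0 / 2 * (norm e)\<^sup>2 + rho2 / (2 * c0) * (rho2 * (norm d)\<^sup>2)"
    using mult_inner_le_young[OF c0_pos, of rho2 d e] by (simp add: power2_eq_square)
  moreover have "rho2 / (2 * c0) * (rho2 * (norm d)\<^sup>2) \<le> rho2 / (2 * c0) * energy (Suc k)"
    using energy_ge_y_diff[of "Suc k"] c0_pos rho2_pos by (intro mult_left_mono) (auto simp: d_def)
  moreover have "c0 * (norm e)\<^sup>2 \<le> bregman_hat (Suc k)"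
    using bregman_hat_lower by (simp add: e_def)
  moreover have "0 \<le> rho2 * (norm d)\<^sup>2"
    using rho2_pos by simp
  moreover have "lyapunov (Suc k)
      = bregman_hat (Suc k) - rho2 * inner d e + rho2 / (2 * c0) * energy (Suc k) + rho2 * (norm d)\<^sup>2"
    by (simp add: lyapunov_def d_def e_def)
  ultimately have "c0 / 2 * (norm e)\<^sup>2 \<le> lyapunov (Suc k)"
    by linarith
  then show ?thesis
    by (simp add: e_def)
qed

lemma lyapunov_nonneg: "0 \<le> lyapunov (Suc k)"
  using c0_pos by (intro order_trans[OF _ lyapunov_lower]) simp

lemma lyapunov_telescope:
  "lyapunov (Suc n) + energy (Suc n) / 2 + (\<Sum>j<n. bregman_step (Suc j) + energy (Suc j) / 2)
   \<le> lyapunov 1 + energy 1 / 2"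
proof -
  have "lyapunov (Suc (Suc j)) + energy (Suc (Suc j)) / 2 + (bregman_step (Suc j) + energy (Suc j) / 2)
        \<le> lyapunov (Suc j) + energy (Suc j) / 2" for j
    using lyapunov_decrease[of j] by linarith
  from telescoping_sum_le[of "\<lambda>n. lyapunov (Suc n) + energy (Suc n) / 2", OF this]
  show ?thesis
    by simp
qed

definition lyapunov_bound :: real where "lyapunov_bound = 2 * lyapunov 1 + energy 1"

lemma energy_le_bound: "energy (Suc n) \<le> lyapunov_bound"
  unfolding lyapunov_bound_def using lyapunov_telescope[of n] lyapunov_nonneg[of n]
    sum_nonneg[of "{..<n}" "\<lambda>j. bregman_step (Suc j) + energy (Suc j) / 2"] bregman_step_nonneg energy_nonneg
  by fastforce

lemma dist_y_le_bound: "c0 * (norm (yh - y (Suc n)))\<^sup>2 \<le> lyapunov_bound"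
  unfolding lyapunov_bound_def using lyapunov_telescope[of n] lyapunov_lower[of n] energy_nonneg[of "Suc n"]
    sum_nonneg[of "{..<n}" "\<lambda>j. bregman_step (Suc j) + energy (Suc j) / 2"] bregman_step_nonneg energy_nonneg
  by fastforce

lemma bregman_energy_sum_le: "(\<Sum>j<n. bregman_step (Suc j) + energy (Suc j)) \<le> lyapunov_bound"
proof -
  have "(\<Sum>j<n. bregman_step (Suc j) + energy (Suc j)) \<le> (\<Sum>j<n. 2 * (bregman_step (Suc j) + energy (Suc j) / 2))"
    using bregman_step_nonneg by (intro sum_mono) simp
  also have "\<dots> = 2 * (\<Sum>j<n. bregman_step (Suc j) + energy (Suc j) / 2)"
    by (simp only: sum_distrib_left)
  also have "\<dots> \<le> lyapunov_bound"
    using lyapunov_telescope[of n] lyapunov_nonneg[of n] energy_nonneg[of "Suc n"]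
    unfolding lyapunov_bound_def by linarith
  finally show ?thesis .
qed

lemma summable_bregman_energy: "summable (\<lambda>j. bregman_step (Suc j) + energy (Suc j))"
  using bregman_step_nonneg energy_nonneg bregman_energy_sum_le
  by (intro summableI_nonneg_bounded) (auto intro: add_nonneg_nonneg)

lemma bregman_eq_bregman_step: "bregman f (mu (Suc k)) (y (Suc (Suc k))) (y (Suc k)) = ereal (bregman_step (Suc k))"
  unfolding bregman_def bregman_step_def
  using f_eq_f_real[OF f_y_finite, of k] f_eq_f_real[OF f_y_finite, of "Suc k"] by simp

lemma bregman_energy_suminf_finite:
  "(\<Sum>k. bregman f (mu (Suc k)) (y (Suc (Suc k))) (y (Suc k)) + ereal (energy (Suc k))) < \<infinity>"
  using suminf_ereal'[OF summable_bregman_energy] by (simp add: bregman_eq_bregman_step)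

lemma energy_tendsto_zero: "energy \<longlonglongrightarrow> 0"
proof -
  have "(\<lambda>k. energy (Suc k)) \<longlonglongrightarrow> 0"
  proof (rule tendsto_sandwich[OF _ _ tendsto_const summable_LIMSEQ_zero[OF summable_bregman_energy]])
    show "\<forall>\<^sub>F k in sequentially. 0 \<le> energy (Suc k)"
      using energy_nonneg by simp
    show "\<forall>\<^sub>F k in sequentially. energy (Suc k) \<le> bregman_step (Suc k) + energy (Suc k)"
      using bregman_step_nonneg by simp
  qed
  then show ?thesis
    by (rule LIMSEQ_imp_Suc)
qed

lemma A_x_tendsto: "(\<lambda>k. A (x k)) \<longlonglongrightarrow> b"
  using tendsto_zero_if_scaled_power2_le[OF rho1_pos energy_ge_A_residual energy_tendsto_zero]
  by (simp add: LIM_zero_iff)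

lemma W_x_minus_y_tendsto_zero: "(\<lambda>k. W (x k) - y k) \<longlonglongrightarrow> 0"
  using tendsto_zero_if_scaled_power2_le[OF rho2_pos energy_ge_W_residual energy_tendsto_zero] .

lemma y_diff_tendsto_zero: "(\<lambda>k. y (Suc k) - y k) \<longlonglongrightarrow> 0"
proof (rule tendsto_zero_if_scaled_power2_le[OF rho2_pos _ LIMSEQ_Suc[OF energy_tendsto_zero]])
  show "rho2 * (norm (y (Suc k) - y k))\<^sup>2 \<le> energy (Suc k)" for k
    using energy_ge_y_diff[of "Suc k"] by simp
qed

lemma bounded_range_y: "bounded (range y)"
proof -
  define R where "R = sqrt (lyapunov_bound / c0)"
  have "range y \<subseteq> insert (y 0) (cball yh R)"
  proof
    fix v assume "v \<in> range y"
    then obtain n where "v = y n" by blast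
    then show "v \<in> insert (y 0) (cball yh R)"
      using norm_le_sqrt_if_scaled_power2_le[OF c0_pos dist_y_le_bound]
      by (cases n) (auto simp: R_def dist_norm)
  qed
  then show ?thesis
    by (rule bounded_subset[rotated]) simp
qed

lemma dist_x_le_bound:
  "c1 * (norm (x (Suc j) - xh))\<^sup>2 \<le> lyapunov_bound / rho1 + 2 * (lyapunov_bound / rho2) + 2 * (lyapunov_bound / c0)"
proof -
  define z where "z = x (Suc j) - xh"
  have "z \<in> DW"
    using x_step xh_dom DW_subspace by (simp add: z_def subspace_diff)
  then have "c1 * (norm z)\<^sup>2 \<le> (norm (A z))\<^sup>2 + (norm (W z))\<^sup>2"
    using coercive by blast
  moreover have "(norm (A z))\<^sup>2 \<le> lyapunov_bound / rho1"
    using energy_ge_A_residual[of "Suc j"] energy_le_bound[of j] rho1_pos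
    by (simp add: z_def A_xh A_linear linear_diff pos_le_divide_eq mult.commute)
  moreover have "(norm (W (x (Suc j)) - y (Suc j)))\<^sup>2 \<le> lyapunov_bound / rho2"
    using energy_ge_W_residual[of "Suc j"] energy_le_bound[of j] rho2_pos
    by (simp add: pos_le_divide_eq mult.commute)
  moreover have "(norm (yh - y (Suc j)))\<^sup>2 \<le> lyapunov_bound / c0"
    using dist_y_le_bound[of j] c0_pos by (simp add: pos_le_divide_eq mult.commute)
  moreover have "(norm (W z))\<^sup>2 \<le> 2 * (norm (W (x (Suc j)) - y (Suc j)))\<^sup>2 + 2 * (norm (yh - y (Suc j)))\<^sup>2"
    using power2_norm_diff_le[of "W (x (Suc j)) - y (Suc j)" "yh - y (Suc j)"] x_step xh_dom
    by (simp add: z_def W_diff)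
  ultimately show ?thesis
    unfolding z_def by linarith
qed

lemma bounded_x_image: "bounded (x ` {1..})"
proof -
  define R where "R = sqrt ((lyapunov_bound / rho1 + 2 * (lyapunov_bound / rho2) + 2 * (lyapunov_bound / c0)) / c1)"
  have "x ` {1..} \<subseteq> cball xh R"
  proof
    fix v assume "v \<in> x ` {1..}"
    then obtain j where "v = x (Suc j)"
      by (metis atLeast_iff image_iff not0_implies_Suc not_one_le_zero)
    then show "v \<in> cball xh R"
      using norm_le_sqrt_if_scaled_power2_le[OF c1_pos dist_x_le_bound]
      by (simp add: R_def dist_norm norm_minus_commute)
  qed
  then show ?thesis
    by (rule bounded_subset[rotated]) simp
qed

end

theorem lemma2p5:
  fixes A :: "'x::{real_inner,complete_space} \<Rightarrow> 'h::{real_inner,complete_space}"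
    and W :: "'x \<Rightarrow> 'y::{real_inner,complete_space}"
    and DW :: "'x set"
    and f :: "'y \<Rightarrow> ereal"
    and c0 c1 rho1 rho2 :: real
    and b :: 'h
    and x :: "nat \<Rightarrow> 'x" and y :: "nat \<Rightarrow> 'y"
    and lam :: "nat \<Rightarrow> 'h" and mu :: "nat \<Rightarrow> 'y"
  assumes A1: "bounded_linear A"
    and A2: "proper_fun f" "lsc_fun f" "c0 > 0" "strongly_convex f c0"
    and A3: "dd_closed_linear_op DW W"
    and A4: "c1 > 0" "\<forall>z\<in>DW. (norm (A z))\<^sup>2 + (norm (W z))\<^sup>2 \<ge> c1 * (norm z)\<^sup>2"
    and consistent: "\<exists>z\<in>DW. b = A z \<and> W z \<in> effdom f"
    and rho: "rho1 > 0" "rho2 > 0"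
    and x_step: "\<And>k. x (Suc k) \<in> DW \<and>
        (\<forall>z\<in>DW. inner (lam k) (A (x (Suc k))) + inner (mu k) (W (x (Suc k)))
                  + rho1 / 2 * (norm (A (x (Suc k)) - b))\<^sup>2 + rho2 / 2 * (norm (W (x (Suc k)) - y k))\<^sup>2
               \<le> inner (lam k) (A z) + inner (mu k) (W z)
                  + rho1 / 2 * (norm (A z - b))\<^sup>2 + rho2 / 2 * (norm (W z - y k))\<^sup>2)"
    and y_step: "\<And>k. \<forall>v. f (y (Suc k)) - ereal (inner (mu k) (y (Suc k)))
                         + ereal (rho2 / 2 * (norm (W (x (Suc k)) - y (Suc k)))\<^sup>2)
                       \<le> f v - ereal (inner (mu k) v) + ereal (rho2 / 2 * (norm (W (x (Suc k)) - v))\<^sup>2)"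
    and lam_step: "\<And>k. lam (Suc k) = lam k + rho1 *\<^sub>R (A (x (Suc k)) - b)"
    and mu_step: "\<And>k. mu (Suc k) = mu k + rho2 *\<^sub>R (W (x (Suc k)) - y (Suc k))"
  defines "E \<equiv> (\<lambda>k. rho1 * (norm (A (x k) - b))\<^sup>2 + rho2 * (norm (W (x k) - y k))\<^sup>2
                    + rho2 * (norm (y k - y (k - 1)))\<^sup>2)"
  shows "bounded (x ` {1..}) \<and> bounded (range y)
    \<and> (\<Sum>k. bregman f (mu (Suc k)) (y (Suc (Suc k))) (y (Suc k)) + ereal (E (Suc k))) < \<infinity>
    \<and> (\<lambda>k. A (x k)) \<longlonglongrightarrow> b
    \<and> (\<lambda>k. W (x k) - y k) \<longlonglongrightarrow> 0
    \<and> (\<lambda>k. y (Suc k) - y k) \<longlonglongrightarrow> 0"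
proof -
  obtain xh where "xh \<in> DW" "A xh = b" "f (W xh) < \<infinity>"
    using consistent unfolding effdom_def by auto
  then interpret admm A W DW f c0 c1 rho1 rho2 b x y lam mu xh
    using A1 A2 A3 A4 rho x_step y_step lam_step mu_step
    by (intro admm.intro) (auto intro: bounded_linear.linear)
  have "E = energy"
    by (simp add: E_def energy_def fun_eq_iff)
  then show ?thesis
    using bounded_x_image bounded_range_y bregman_energy_suminf_finite A_x_tendsto
      W_x_minus_y_tendsto_zero y_diff_tendsto_zero
    by simp
qed

end
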